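(* Let $(X,\mathcal{A},\mu,\tau,C_\tau)$ be a composition dynamical system on the Orlicz–Lorentz space $\mathbb{L}^{\varphi,h}(\mu)$, where in addition $\tau$ is bijective and $\tau^{-1}$ also satisfies $\mu(\tau(A))\le M'\mu(A)$ for all $A\in\mathcal{A}$ and some $M'>0$, so that $C_\tau$ is invertible with $C_\tau^{-1}=C_{\tau^{-1}}$. Then $C_\tau$ is expansive if and only if for every $A\in\mathcal{A}$ with $0<\mu(A)<\infty$, $$\inf_{n\in\mathbb{Z}}\ \varphi^{-1}\!\left(\frac{1}{\int_0^{\mu(\tau^{-n}(A))}h(t)\,dt}\right)=0 .$$
   Context: Let $(X,\mathcal{A},\mu)$ be a measure space. For a measurable $g$, its distribution function is $\mu_g(\lambda)=\mu\{x:|g(x)|>\lambda\}$ and its non-increasing rearrangement is $g^*(t)=\inf\{\lambda>0:\mu_g(\lambda)\le t\}$. An Orlicz function is a convex $\varphi:[0,\infty)\to[0,\infty)$ with $\varphi(0)=0$ and $\varphi(s)\to\infty$ as $s\to\infty$; here $\varphi$ is assumed continuous and strictly increasing, and $\varphi^{-1}$ denotes its inverse. A weight is a locally integrable, non-increasing function $h:[0,\mu(X))\to(0,\infty)$. The Orlicz–Lorentz space is $\mathbb{L}^{\varphi,h}(\mu)=\{g \text{ measurable}: I_{\varphi,h}(\lambda g)<\infty \text{ for some }\lambda>0\}$ with $I_{\varphi,h}(g)=\int_0^{\mu(X)}\varphi(g^*(t))h(t)\,dt$, normed by $\|g\|_{\varphi,h}=\inf\{\lambda>0: I_{\varphi,h}(g/\lambda)\le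 1\}$ (functions equal a.e. identified). For $A\in\mathcal{A}$ with $0<\mu(A)<\infty$ one has $\|\chi_A\|_{\varphi,h}=1/\varphi^{-1}\big(1/\int_0^{\mu(A)}h(t)\,dt\big)$. A composition dynamical system $(X,\mathcal{A},\mu,\tau,C_\tau)$ means: $(X,\mathcal{A},\mu)$ is $\sigma$-finite; $\tau:X\to X$ is injective and bi-measurable; there is $M>0$ with $\mu(\tau^{-1}(A))\le M\mu(A)$ for all $A\in\mathcal{A}$; and $C_\tau g=g\circ\tau$ is the (bounded) composition operator on $\mathbb{L}^{\varphi,h}(\mu)$. For an invertible bounded operator $T$ on a Banach space $Y$ with unit sphere $S_Y$: $T$ is expansive if for every $y\in S_Y$ there is $n\in\mathbb{Z}$ with $\|T^n y\|\ge 2$ (equivalently, $\sup_{n\in\mathbb{Z}}\|T^n y\|=\infty$ for every $y\neq0$). *)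

theory Defs
  imports "HOL-Analysis.Analysis"
begin

definition distf :: "'a measure \<Rightarrow> ('a \<Rightarrow> real) \<Rightarrow> real \<Rightarrow> ennreal" where
  "distf M g l = emeasure M {x \<in> space M. l < \<bar>g x\<bar>}"

text \<open>Non-increasing rearrangement g*(t) = inf {l > 0. mu_g(l) <= t}, with inf of the empty set = infinity.\<close>
definition rearr :: "'a measure \<Rightarrow> ('a \<Rightarrow> real) \<Rightarrow> real \<Rightarrow> ereal" where
  "rearr M g t = Inf {ereal l | l. 0 < l \<and> distf M g l \<le> ennreal t}"

definition phi_ext :: "(real \<Rightarrow> real) \<Rightarrow> ereal \<Rightarrow> ennreal" where
  "phi_ext \<phi> x = (if x = \<infinity> then \<infinity> else ennreal (\<phi> (real_of_ereal x)))"

definition upto_set :: "ennreal \<Rightarrow> real set" where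
  "upto_set a = {t. 0 \<le> t \<and> ennreal t < a}"

definition meas_dom :: "'a measure \<Rightarrow> real set" where
  "meas_dom M = upto_set (emeasure M (space M))"

definition OL_mod :: "(real \<Rightarrow> real) \<Rightarrow> (real \<Rightarrow> real) \<Rightarrow> 'a measure \<Rightarrow> ('a \<Rightarrow> real) \<Rightarrow> ennreal" where
  "OL_mod \<phi> h M g =
     (\<integral>\<^sup>+ t. phi_ext \<phi> (rearr M g t) * ennreal (h t) * indicator (meas_dom M) t \<partial>lborel)"

definition OL_space :: "(real \<Rightarrow> real) \<Rightarrow> (real \<Rightarrow> real) \<Rightarrow> 'a measure \<Rightarrow> ('a \<Rightarrow> real) set" where
  "OL_space \<phi> h M = {g \<in> borel_measurable M. \<exists>l>0. OL_mod \<phi> h M (\<lambda>x. l * g x) < \<infinity>}"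

definition OL_norm :: "(real \<Rightarrow> real) \<Rightarrow> (real \<Rightarrow> real) \<Rightarrow> 'a measure \<Rightarrow> ('a \<Rightarrow> real) \<Rightarrow> real" where
  "OL_norm \<phi> h M g = Inf {l::real. 0 < l \<and> OL_mod \<phi> h M (\<lambda>x. g x / l) \<le> 1}"

definition orlicz_function :: "(real \<Rightarrow> real) \<Rightarrow> bool" where
  "orlicz_function \<phi> \<longleftrightarrow> convex_on {0..} \<phi> \<and> \<phi> 0 = 0 \<and> continuous_on {0..} \<phi>
     \<and> strict_mono_on {0..} \<phi> \<and> filterlim \<phi> at_top at_top"

definition phi_inv :: "(real \<Rightarrow> real) \<Rightarrow> real \<Rightarrow> real" where
  "phi_inv \<phi> y = (THE s. 0 \<le> s \<and> \<phi> s = y)"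

definition weight :: "'a measure \<Rightarrow> (real \<Rightarrow> real) \<Rightarrow> bool" where
  "weight M h \<longleftrightarrow> (\<forall>t\<in>meas_dom M. 0 < h t)
     \<and> (\<forall>s\<in>meas_dom M. \<forall>t\<in>meas_dom M. s \<le> t \<longrightarrow> h t \<le> h s)
     \<and> (\<forall>b\<in>meas_dom M. set_integrable lborel {0..b} h)"

definition hint_upto :: "(real \<Rightarrow> real) \<Rightarrow> ennreal \<Rightarrow> ennreal" where
  "hint_upto h a = (\<integral>\<^sup>+ t. ennreal (h t) * indicator (upto_set a) t \<partial>lborel)"

definition tau_pow :: "'a measure \<Rightarrow> ('a \<Rightarrow> 'a) \<Rightarrow> int \<Rightarrow> 'a \<Rightarrow> 'a" where
  "tau_pow M \<tau> n = (if 0 \<le> n then \<tau> ^^ nat n else (inv_into (space M) \<tau>) ^^ nat (- n))"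

definition comp_dyn_sys :: "(real \<Rightarrow> real) \<Rightarrow> (real \<Rightarrow> real) \<Rightarrow> 'a measure \<Rightarrow> ('a \<Rightarrow> 'a) \<Rightarrow> bool" where
  "comp_dyn_sys \<phi> h M \<tau> \<longleftrightarrow> sigma_finite_measure M
     \<and> \<tau> \<in> M \<rightarrow>\<^sub>M M \<and> inj_on \<tau> (space M) \<and> (\<forall>A\<in>sets M. \<tau> ` A \<in> sets M)
     \<and> (\<exists>c>0. \<forall>A\<in>sets M. emeasure M (\<tau> -` A \<inter> space M) \<le> ennreal c * emeasure M A)
     \<and> (\<forall>g\<in>OL_space \<phi> h M. g \<circ> \<tau> \<in> OL_space \<phi> h M)
     \<and> (\<exists>c. \<forall>g\<in>OL_space \<phi> h M. OL_norm \<phi> h M (g \<circ> \<tau>) \<le> c * OL_norm \<phi> h M g)"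

definition expansive_comp :: "(real \<Rightarrow> real) \<Rightarrow> (real \<Rightarrow> real) \<Rightarrow> 'a measure \<Rightarrow> ('a \<Rightarrow> 'a) \<Rightarrow> bool" where
  "expansive_comp \<phi> h M \<tau> \<longleftrightarrow>
     (\<forall>g\<in>OL_space \<phi> h M. OL_norm \<phi> h M g = 1 \<longrightarrow>
        (\<exists>n::int. OL_norm \<phi> h M (g \<circ> tau_pow M \<tau> n) \<ge> 2))"

end

theory Submission
  imports Defs
begin

text \<open>For \<open>B\<close> of positive finite measure the norm of \<open>c \<chi>\<^sub>B\<close> is \<open>c\<close> divided by
  \<open>\<phi>\<^sup>-\<^sup>1(1 / \<integral>\<^sub>0\<^sup>s h)\<close> with \<open>s = \<mu>(B)\<close> (the \<open>recip_indicator_norm\<close> of \<open>B\<close>), and \<open>C\<^sub>\<tau>\<^sup>n\<close> maps \<open>\<chi>\<^sub>B\<close> to the indicator of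
  \<open>\<tau>\<^sup>-\<^sup>n B\<close>. If the infimum along the preimages of some \<open>A\<close> were positive, normalising the indicator
  of a preimage where it is nearly attained would give a unit vector whose whole orbit has norm below 2.
  Conversely, by \<open>\<sigma>\<close>-finiteness a unit vector \<open>g\<close> dominates \<open>e \<chi>\<^sub>A\<close> for some \<open>e > 0\<close> and some \<open>A\<close> of
  positive finite measure, so \<open>\<parallel>C\<^sub>\<tau>\<^sup>n g\<parallel>\<close> is at least \<open>e\<close> divided by the quantity in the infimum for
  \<open>\<tau>\<^sup>-\<^sup>n A\<close>, which exceeds 2 for a suitable \<open>n\<close>. Two-sided nonsingularity of \<open>\<tau>\<close> keeps all these
  preimages of positive finite measure and keeps \<open>C\<^sub>\<tau>\<^sup>n g\<close> in the space.\<close>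

section \<open>Orlicz functions and rearrangements\<close>

lemma orlicz_functionD:
  assumes "orlicz_function \<phi>"
  shows orlicz_zero: "\<phi> 0 = 0"
    and orlicz_less: "\<And>s t. 0 \<le> s \<Longrightarrow> s < t \<Longrightarrow> \<phi> s < \<phi> t"
    and orlicz_mono: "\<And>s t. 0 \<le> s \<Longrightarrow> s \<le> t \<Longrightarrow> \<phi> s \<le> \<phi> t"
    and orlicz_nonneg: "\<And>s. 0 \<le> s \<Longrightarrow> 0 \<le> \<phi> s"
proof -
  have sm: "strict_mono_on {0..} \<phi>" and z: "\<phi> 0 = 0"
    using assms unfolding orlicz_function_def by blast+
  show "\<phi> 0 = 0" by (fact z)
  show lt: "\<phi> s < \<phi> t" if "0 \<le> s" "s < t" for s t
    using sm that unfolding strict_mono_on_def by simp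
  show le: "\<phi> s \<le> \<phi> t" if "0 \<le> s" "s \<le> t" for s t
    using lt[of s t] that by (cases "s = t") auto
  show "0 \<le> \<phi> s" if "0 \<le> s" for s using le[of 0 s] that z by simp
qed

lemma orlicz_divide_le:
  assumes "orlicz_function \<phi>" "0 \<le> s" "1 \<le> k"
  shows "\<phi> (s / k) \<le> \<phi> s / k"
proof -
  have "convex_on {0..} \<phi>" using assms(1) unfolding orlicz_function_def by auto
  then have "\<phi> ((1 - 1/k) *\<^sub>R 0 + (1/k) *\<^sub>R s) \<le> (1 - 1/k) * \<phi> 0 + (1/k) * \<phi> s"
    using assms by (intro convex_onD) auto
  then show ?thesis using orlicz_zero[OF assms(1)] by (simp add: divide_inverse mult.commute)
qed

lemma phi_inv_inverse:
  assumes "orlicz_function \<phi>" "0 \<le> y"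
  shows phi_inv_nonneg: "0 \<le> phi_inv \<phi> y" and phi_phi_inv: "\<phi> (phi_inv \<phi> y) = y"
proof -
  have "filterlim \<phi> at_top at_top" and ct: "continuous_on {0..} \<phi>"
    using assms(1) unfolding orlicz_function_def by auto
  then obtain b where b: "\<And>x. x \<ge> b \<Longrightarrow> y \<le> \<phi> x"
    by (auto simp: filterlim_at_top eventually_at_top_linorder)
  have "\<exists>x. 0 \<le> x \<and> x \<le> max b 0 \<and> \<phi> x = y"
    using assms b orlicz_zero[OF assms(1)]
    by (intro IVT') (auto intro: continuous_on_subset[OF ct])
  then obtain x where x: "0 \<le> x" "\<phi> x = y" by auto
  have "z = x" if "0 \<le> z" "\<phi> z = y" for z
    using orlicz_less[OF assms(1)] x that by (metis linorder_neqE_linordered_idom less_irrefl)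
  then have "phi_inv \<phi> y = x" unfolding phi_inv_def using x by blast
  then show "0 \<le> phi_inv \<phi> y" "\<phi> (phi_inv \<phi> y) = y" using x by simp_all
qed

lemma orlicz_le_iff_le_phi_inv:
  assumes "orlicz_function \<phi>" "0 \<le> y" "0 \<le> s"
  shows "\<phi> s \<le> y \<longleftrightarrow> s \<le> phi_inv \<phi> y"
  using phi_inv_inverse[OF assms(1,2)] orlicz_less[OF assms(1)] orlicz_mono[OF assms(1)] assms(3)
  by (metis not_le)

lemma phi_inv_pos:
  assumes "orlicz_function \<phi>" "0 < y"
  shows "0 < phi_inv \<phi> y"
  using phi_inv_inverse[OF assms(1)] assms orlicz_zero[OF assms(1)]
  by (metis less_eq_real_def less_irrefl)

lemma borel_measurable_antimono:
  fixes F :: "real \<Rightarrow> 'b::{linorder_topology, second_countable_topology}"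
  assumes "\<And>x y. x \<le> y \<Longrightarrow> F y \<le> F x"
  shows "F \<in> borel_measurable borel"
proof (rule borel_measurableI_greater)
  fix y
  have "is_interval {x. y < F x}"
    unfolding is_interval_1 using assms by (blast intro: less_le_trans)
  then show "{x \<in> space borel. y < F x} \<in> sets borel"
    using real_interval_borel_measurable by simp
qed

lemma rearr_nonneg: "0 \<le> rearr M f t"
  unfolding rearr_def by (rule Inf_greatest) auto

lemma rearr_le: "0 < l \<Longrightarrow> distf M f l \<le> ennreal t \<Longrightarrow> rearr M f t \<le> ereal l"
  unfolding rearr_def by (rule Inf_lower) blast

lemma rearr_eq_0:
  assumes "\<And>l. 0 < l \<Longrightarrow> distf M f l \<le> ennreal t"
  shows "rearr M f t = 0"
proof (rule antisym)
  show "rearr M f t \<le> 0"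
    by (rule ereal_le_epsilon2) (simp add: rearr_le assms)
qed (rule rearr_nonneg)

lemma rearr_antimono: "s \<le> t \<Longrightarrow> rearr M f t \<le> rearr M f s"
  unfolding rearr_def
  by (intro Inf_superset_mono) (auto intro: order_trans[OF _ ennreal_leI])

lemma rearr_le_rearr_dilate:
  assumes "\<And>l. distf M f l \<le> ennreal C * distf M g l" "1 \<le> C"
  shows "rearr M f t \<le> rearr M g (t / C)"
  unfolding rearr_def
proof (rule Inf_superset_mono, safe)
  fix l assume l: "0 < l" "distf M g l \<le> ennreal (t / C)"
  have "distf M f l \<le> ennreal t"
  proof (cases "0 \<le> t")
    case True
    have "distf M f l \<le> ennreal C * ennreal (t / C)"
      using assms(1)[of l] l(2) by (meson mult_left_mono order_trans zero_le)
    also have "\<dots> = ennreal t" using True assms(2) by (simp add: ennreal_mult[symmetric])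
    finally show ?thesis .
  next
    case False
    then have "ennreal (t / C) = 0" using assms(2) by (simp add: divide_nonpos_pos ennreal_eq_0_iff)
    then have "distf M g l = 0" using l(2) by simp
    then show ?thesis using assms(1)[of l] by simp
  qed
  then show "\<exists>l'. ereal l = ereal l' \<and> 0 < l' \<and> distf M f l' \<le> ennreal t" using l by blast
qed

lemma distf_mono:
  assumes "g \<in> borel_measurable M" "\<And>x. x \<in> space M \<Longrightarrow> \<bar>f x\<bar> \<le> \<bar>g x\<bar>"
  shows "distf M f l \<le> distf M g l"
  unfolding distf_def using assms by (intro emeasure_mono) (auto intro: less_le_trans)

lemma rearr_mono:
  assumes "g \<in> borel_measurable M" "\<And>x. x \<in> space M \<Longrightarrow> \<bar>f x\<bar> \<le> \<bar>g x\<bar>"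
  shows "rearr M f t \<le> rearr M g t"
  using rearr_le_rearr_dilate[of M f 1 g t] distf_mono[OF assms] by simp

lemma distf_divide: "0 < m \<Longrightarrow> distf M (\<lambda>x. f x / m) l = distf M f (l * m)"
  unfolding distf_def by (simp add: abs_divide pos_less_divide_eq)

lemma rearr_divide:
  assumes "0 < k"
  shows "ereal k * rearr M (\<lambda>x. f x / k) t \<le> rearr M f t"
  unfolding rearr_def[of M f]
proof (rule Inf_greatest, safe)
  fix l assume l: "0 < l" "distf M f l \<le> ennreal t"
  then have "rearr M (\<lambda>x. f x / k) t \<le> ereal (l / k)"
    using assms by (intro rearr_le) (simp_all add: distf_divide)
  then have "ereal k * rearr M (\<lambda>x. f x / k) t \<le> ereal k * ereal (l / k)"
    using assms by (intro ereal_mult_left_mono) auto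
  then show "ereal k * rearr M (\<lambda>x. f x / k) t \<le> ereal l" using assms by simp
qed

lemma rearr_scaled_indicator:
  assumes "B \<in> sets M" "0 < c"
  shows "rearr M (\<lambda>x. c * indicator B x) t = (if ennreal t < emeasure M B then ereal c else 0)"
proof -
  have distf: "distf M (\<lambda>x. c * indicator B x) l = (if l < c then emeasure M B else 0)" if "0 < l" for l
  proof -
    have "{x \<in> space M. l < \<bar>c * indicator B x\<bar>} = (if l < c then B else {})"
      using sets.sets_into_space[OF assms(1)] that assms(2) by (auto simp: indicator_def)
    then show ?thesis unfolding distf_def by simp
  qed
  show ?thesis
  proof (cases "ennreal t < emeasure M B")
    case True
    have "rearr M (\<lambda>x. c * indicator B x) t \<le> ereal c"
      using assms(2) distf by (intro rearr_le) auto
    moreover have "ereal c \<le> rearr M (\<lambda>x. c * indicator B x) t"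
      unfolding rearr_def
    proof (rule Inf_greatest, safe)
      fix l assume "0 < l" "distf M (\<lambda>x. c * indicator B x) l \<le> ennreal t"
      then show "ereal c \<le> ereal l" using True distf[of l] by (auto split: if_splits)
    qed
    ultimately show ?thesis using True by simp
  next
    case False
    then have "rearr M (\<lambda>x. c * indicator B x) t = 0"
      using distf by (intro rearr_eq_0) (simp add: not_less)
    then show ?thesis using False by simp
  qed
qed

lemma phi_ext_mono:
  assumes "orlicz_function \<phi>" "0 \<le> x" "x \<le> y"
  shows "phi_ext \<phi> x \<le> phi_ext \<phi> y"
proof (cases "y = \<infinity>")
  case False
  then have "x \<noteq> \<infinity>" "real_of_ereal x \<le> real_of_ereal y" "0 \<le> real_of_ereal x"
    using assms by (auto intro: real_of_ereal_positive_mono real_of_ereal_pos)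
  then show ?thesis using False orlicz_mono[OF assms(1)] by (simp add: phi_ext_def ennreal_leI)
qed (simp add: phi_ext_def)

lemma phi_ext_rearr_divide:
  assumes "orlicz_function \<phi>" "1 \<le> k"
  shows "phi_ext \<phi> (rearr M (\<lambda>x. f x / k) t) \<le> phi_ext \<phi> (rearr M f t) / ennreal k"
proof (cases "rearr M f t = \<infinity>")
  case True then show ?thesis by (simp add: phi_ext_def ennreal_top_divide)
next
  case False
  obtain r where r: "rearr M f t = ereal r" "0 \<le> r"
    using False rearr_nonneg[of M f t] by (cases "rearr M f t") auto
  have "ereal k * rearr M (\<lambda>x. f x / k) t \<le> ereal r"
    using rearr_divide[of k M f t] assms(2) r by simp
  then obtain a where a: "rearr M (\<lambda>x. f x / k) t = ereal a" "0 \<le> a" "a \<le> r / k"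
    using rearr_nonneg[of M "\<lambda>x. f x / k" t] assms(2)
    by (cases "rearr M (\<lambda>x. f x / k) t") (auto simp: field_simps)
  have "\<phi> a \<le> \<phi> (r / k)" using orlicz_mono[OF assms(1)] a by blast
  also have "\<dots> \<le> \<phi> r / k" using orlicz_divide_le[OF assms(1) r(2) assms(2)] .
  finally have "ennreal (\<phi> a) \<le> ennreal (\<phi> r / k)" by (rule ennreal_leI)
  then show ?thesis
    using a r assms(2) orlicz_nonneg[OF assms(1) r(2)] by (simp add: phi_ext_def divide_ennreal)
qed

section \<open>The Orlicz--Lorentz modular and norm\<close>

lemma borel_measurable_phi_ext_rearr:
  "orlicz_function \<phi> \<Longrightarrow> (\<lambda>t. phi_ext \<phi> (rearr M f t)) \<in> borel_measurable borel"
  by (intro borel_measurable_antimono phi_ext_mono rearr_nonneg rearr_antimono)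

lemma upto_set_downward: "t \<in> upto_set a \<Longrightarrow> 0 \<le> s \<Longrightarrow> s \<le> t \<Longrightarrow> s \<in> upto_set a"
  unfolding upto_set_def by (auto intro: le_less_trans[OF ennreal_leI])

lemma upto_set_borel: "upto_set a \<in> sets borel"
  by (intro real_interval_borel_measurable)
    (auto simp: is_interval_1 upto_set_def intro: le_less_trans[OF ennreal_leI])

lemma upto_set_mono: "a \<le> b \<Longrightarrow> upto_set a \<subseteq> upto_set b"
  unfolding upto_set_def by auto

lemma upto_set_ennreal: "0 \<le> b \<Longrightarrow> upto_set (ennreal b) = {0..<b}"
  unfolding upto_set_def by (auto simp: ennreal_less_iff)

lemma weightD:
  assumes "weight M h"
  shows weight_pos: "\<And>t. t \<in> meas_dom M \<Longrightarrow> 0 < h t"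
    and weight_antimono: "\<And>s t. s \<in> meas_dom M \<Longrightarrow> t \<in> meas_dom M \<Longrightarrow> s \<le> t \<Longrightarrow> h t \<le> h s"
  using assms unfolding weight_def by blast+

lemma borel_measurable_weight_upto:
  assumes w: "weight M h" and a: "a \<le> emeasure M (space M)"
  shows "(\<lambda>t. ennreal (h t) * indicator (upto_set a) t) \<in> borel_measurable borel"
proof -
  have "mono_on (upto_set a) (\<lambda>t. - h t)"
    using upto_set_mono[OF a] weight_antimono[OF w] unfolding meas_dom_def mono_on_def by force
  then have "(\<lambda>t. - h t) \<in> borel_measurable (restrict_space borel (upto_set a))"
    by (rule borel_measurable_mono_on_fnc)
  then have "(\<lambda>t. ennreal (- (- h t))) \<in> borel_measurable (restrict_space borel (upto_set a))"
    by measurable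
  then show ?thesis
    using upto_set_borel by (subst (asm) borel_measurable_restrict_space_iff_ennreal) auto
qed

lemma borel_measurable_OL_mod_integrand:
  assumes "orlicz_function \<phi>" "weight M h"
  shows "(\<lambda>t. phi_ext \<phi> (rearr M f t) * ennreal (h t) * indicator (meas_dom M) t) \<in> borel_measurable borel"
proof -
  have "(\<lambda>t. phi_ext \<phi> (rearr M f t)) \<in> borel_measurable borel"
    "(\<lambda>t. ennreal (h t) * indicator (meas_dom M) t) \<in> borel_measurable borel"
    using borel_measurable_phi_ext_rearr[OF assms(1)]
      borel_measurable_weight_upto[OF assms(2) order_refl, folded meas_dom_def] by blast+
  then have "(\<lambda>t. phi_ext \<phi> (rearr M f t) * (ennreal (h t) * indicator (meas_dom M) t)) \<in> borel_measurable borel"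
    by measurable
  then show ?thesis by (simp add: mult.assoc)
qed

lemma OL_mod_scaled_indicator:
  assumes phi: "orlicz_function \<phi>" and w: "weight M h" and B: "B \<in> sets M" and c: "0 < c"
  shows "OL_mod \<phi> h M (\<lambda>x. c * indicator B x) = ennreal (\<phi> c) * hint_upto h (emeasure M B)"
proof -
  have BX: "upto_set (emeasure M B) \<subseteq> meas_dom M"
    unfolding meas_dom_def by (intro upto_set_mono emeasure_space)
  have "phi_ext \<phi> (rearr M (\<lambda>x. c * indicator B x) t) * ennreal (h t) * indicator (meas_dom M) t
      = ennreal (\<phi> c) * (ennreal (h t) * indicator (upto_set (emeasure M B)) t)" for t
    using BX rearr_scaled_indicator[OF B c, of t] orlicz_zero[OF phi]
    by (auto simp: phi_ext_def upto_set_def meas_dom_def indicator_def)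
  then have "OL_mod \<phi> h M (\<lambda>x. c * indicator B x)
     = (\<integral>\<^sup>+ t. ennreal (\<phi> c) * (ennreal (h t) * indicator (upto_set (emeasure M B)) t) \<partial>lborel)"
    unfolding OL_mod_def by simp
  also have "\<dots> = ennreal (\<phi> c) * hint_upto h (emeasure M B)"
    unfolding hint_upto_def
    using borel_measurable_weight_upto[OF w emeasure_space] by (intro nn_integral_cmult) simp
  finally show ?thesis .
qed

text \<open>Since the weight is positive and non-increasing, \<open>\<integral>\<^sub>0\<^sup>b h\<close> with \<open>b = \<mu>(B)\<close> lies between
  \<open>b/2 \<cdot> h(b/2)\<close> and \<open>b \<cdot> h(0)\<close>.\<close>
lemma hint_upto_pos_finite:
  assumes w: "weight M h" and B: "B \<in> sets M" and pos: "0 < emeasure M B" and fin: "emeasure M B < \<infinity>"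
  shows "0 < hint_upto h (emeasure M B)" "hint_upto h (emeasure M B) < \<infinity>"
proof -
  define b where "b = enn2real (emeasure M B)"
  have b0: "0 < b" unfolding b_def using pos fin by (simp add: enn2real_positive_iff)
  have "emeasure M B = ennreal b" unfolding b_def using fin by simp
  then have U: "upto_set (emeasure M B) = {0..<b}" using b0 by (simp add: upto_set_ennreal)
  have sub: "{0..<b} \<subseteq> meas_dom M"
    unfolding U[symmetric] meas_dom_def by (intro upto_set_mono emeasure_space)
  have "hint_upto h (emeasure M B) \<le> (\<integral>\<^sup>+ t. ennreal (h 0) * indicator {0..<b} t \<partial>lborel)"
    unfolding hint_upto_def U using sub b0 weight_antimono[OF w, of 0]
    by (intro nn_integral_mono) (auto simp: indicator_def subset_iff intro!: ennreal_leI)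
  also have "\<dots> = ennreal (h 0) * ennreal b" using b0 by (simp add: nn_integral_cmult_indicator)
  also have "\<dots> < \<infinity>" by (simp add: ennreal_mult_less_top)
  finally show "hint_upto h (emeasure M B) < \<infinity>" .
  have "0 < h (b/2)" using weight_pos[OF w, of "b/2"] subsetD[OF sub, of "b/2"] b0 by simp
  then have "0 < ennreal (h (b/2)) * ennreal (b/2)" using b0 by (simp add: ennreal_mult'[symmetric])
  also have "\<dots> = (\<integral>\<^sup>+ t. ennreal (h (b/2)) * indicator {0..<b/2} t \<partial>lborel)"
    using b0 by (simp add: nn_integral_cmult_indicator)
  also have "\<dots> \<le> hint_upto h (emeasure M B)"
    unfolding hint_upto_def U using sub b0 weight_antimono[OF w, of _ "b/2"]
    by (intro nn_integral_mono) (auto simp: indicator_def subset_iff intro!: ennreal_leI)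
  finally show "0 < hint_upto h (emeasure M B)" .
qed

lemma hint_upto_eq_ennreal:
  assumes "weight M h" "B \<in> sets M" "0 < emeasure M B" "emeasure M B < \<infinity>"
  obtains H where "hint_upto h (emeasure M B) = ennreal H" "0 < H"
  using hint_upto_pos_finite[OF assms]
  by (intro that[of "enn2real (hint_upto h (emeasure M B))"]) (auto simp: enn2real_positive_iff)

definition recip_indicator_norm :: "(real \<Rightarrow> real) \<Rightarrow> (real \<Rightarrow> real) \<Rightarrow> 'a measure \<Rightarrow> 'a set \<Rightarrow> real" where
  "recip_indicator_norm \<phi> h M B = phi_inv \<phi> (enn2real (1 / hint_upto h (emeasure M B)))"

lemma recip_indicator_norm_pos:
  assumes "orlicz_function \<phi>" "weight M h" "B \<in> sets M" "0 < emeasure M B" "emeasure M B < \<infinity>"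
  shows "0 < recip_indicator_norm \<phi> h M B"
proof -
  obtain H where "hint_upto h (emeasure M B) = ennreal H" "0 < H"
    using hint_upto_eq_ennreal[OF assms(2-)] .
  then show ?thesis
    unfolding recip_indicator_norm_def using phi_inv_pos[OF assms(1)] divide_ennreal[of 1 H] by simp
qed

lemma OL_norm_scaled_indicator:
  assumes phi: "orlicz_function \<phi>" and w: "weight M h" and B: "B \<in> sets M"
    and pos: "0 < emeasure M B" and fin: "emeasure M B < \<infinity>" and c: "0 < c"
  shows "OL_norm \<phi> h M (\<lambda>x. c * indicator B x) = c / recip_indicator_norm \<phi> h M B"
proof -
  obtain H where H: "hint_upto h (emeasure M B) = ennreal H" "0 < H"
    using hint_upto_eq_ennreal[OF w B pos fin] .
  define v where "v = phi_inv \<phi> (1 / H)"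
  have v: "0 < v" unfolding v_def using phi_inv_pos[OF phi] H(2) by simp
  have feasible: "OL_mod \<phi> h M (\<lambda>x. c * indicator B x / l) \<le> 1 \<longleftrightarrow> c / v \<le> l" if l: "0 < l" for l
  proof -
    have "(\<lambda>x. c * indicator B x / l) = (\<lambda>x. (c / l) * indicator B x)" by auto
    then have "OL_mod \<phi> h M (\<lambda>x. c * indicator B x / l) = ennreal (\<phi> (c / l) * H)"
      using OL_mod_scaled_indicator[OF phi w B, of "c / l"] c l H orlicz_nonneg[OF phi, of "c / l"]
      by (simp add: ennreal_mult)
    also have "\<dots> \<le> 1 \<longleftrightarrow> \<phi> (c / l) \<le> 1 / H" using H(2) by (simp add: field_simps)
    also have "\<dots> \<longleftrightarrow> c / l \<le> v" unfolding v_def using orlicz_le_iff_le_phi_inv[OF phi] H(2) c l by simp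
    also have "\<dots> \<longleftrightarrow> c / v \<le> l" using v l by (simp add: field_simps)
    finally show ?thesis .
  qed
  have "0 < l \<and> OL_mod \<phi> h M (\<lambda>x. c * indicator B x / l) \<le> 1 \<longleftrightarrow> c / v \<le> l" for l
    using feasible[of l] c v by (smt (verit) divide_pos_pos)
  then have "{l. 0 < l \<and> OL_mod \<phi> h M (\<lambda>x. c * indicator B x / l) \<le> 1} = {c / v..}" by auto
  then show ?thesis
    unfolding OL_norm_def v_def recip_indicator_norm_def using H divide_ennreal[of 1 H] by simp
qed

lemma scaled_indicator_in_OL_space:
  assumes phi: "orlicz_function \<phi>" and w: "weight M h" and B: "B \<in> sets M"
    and pos: "0 < emeasure M B" and fin: "emeasure M B < \<infinity>" and c: "0 < c"
  shows "(\<lambda>x. c * indicator B x) \<in> OL_space \<phi> h M"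
  unfolding OL_space_def
proof (intro CollectI conjI exI[of _ 1])
  show "(\<lambda>x. c * indicator B x) \<in> borel_measurable M" using B by measurable
  show "OL_mod \<phi> h M (\<lambda>x. 1 * (c * indicator B x)) < \<infinity>"
    using OL_mod_scaled_indicator[OF phi w B c] hint_upto_pos_finite(2)[OF w B pos fin]
    by (simp add: ennreal_mult_less_top)
qed simp

lemma OL_mod_mono:
  assumes "orlicz_function \<phi>" "\<And>t. rearr M f t \<le> rearr M g t"
  shows "OL_mod \<phi> h M f \<le> OL_mod \<phi> h M g"
  unfolding OL_mod_def
  using phi_ext_mono[OF assms(1) rearr_nonneg assms(2)]
  by (intro nn_integral_mono mult_right_mono) auto

lemma OL_mod_divide:
  assumes phi: "orlicz_function \<phi>" and w: "weight M h" and k: "1 \<le> k"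
  shows "OL_mod \<phi> h M (\<lambda>x. f x / k) \<le> OL_mod \<phi> h M f / ennreal k"
proof -
  have "OL_mod \<phi> h M (\<lambda>x. f x / k)
      \<le> (\<integral>\<^sup>+ t. phi_ext \<phi> (rearr M f t) * ennreal (h t) * indicator (meas_dom M) t / ennreal k \<partial>lborel)"
    unfolding OL_mod_def
  proof (rule nn_integral_mono)
    fix t
    have "phi_ext \<phi> (rearr M (\<lambda>x. f x / k) t) * ennreal (h t) * indicator (meas_dom M) t
        \<le> phi_ext \<phi> (rearr M f t) / ennreal k * ennreal (h t) * indicator (meas_dom M) t"
      using phi_ext_rearr_divide[OF phi k] by (intro mult_right_mono) auto
    then show "phi_ext \<phi> (rearr M (\<lambda>x. f x / k) t) * ennreal (h t) * indicator (meas_dom M) t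
        \<le> phi_ext \<phi> (rearr M f t) * ennreal (h t) * indicator (meas_dom M) t / ennreal k"
      unfolding divide_ennreal_def by (simp only: ac_simps)
  qed
  also have "\<dots> = OL_mod \<phi> h M f / ennreal k"
    unfolding OL_mod_def
    by (rule nn_integral_divide) (use borel_measurable_OL_mod_integrand[OF phi w] in simp)
  finally show ?thesis .
qed

text \<open>The substitution \<open>t \<mapsto> t / C\<close> costs a factor \<open>C\<close>; the weight only improves since it is
  non-increasing.\<close>
lemma OL_mod_dilate:
  assumes phi: "orlicz_function \<phi>" and w: "weight M h"
    and C: "1 \<le> C" "\<And>l. distf M f l \<le> ennreal C * distf M g l"
  shows "OL_mod \<phi> h M f \<le> ennreal C * OL_mod \<phi> h M g"
proof -
  define F where "F s = phi_ext \<phi> (rearr M g s) * ennreal (h s) * indicator (meas_dom M) s" for s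
  have F: "F \<in> borel_measurable borel" unfolding F_def by (rule borel_measurable_OL_mod_integrand[OF phi w])
  have "phi_ext \<phi> (rearr M f t) * ennreal (h t) * indicator (meas_dom M) t \<le> F (t / C)" for t
  proof (cases "t \<in> meas_dom M")
    case True
    then have "0 \<le> t / C" "t / C \<le> t"
      using C(1) by (auto simp: meas_dom_def upto_set_def divide_le_eq
        intro: mult_left_mono[of 1 C t, simplified])
    then have tC: "t / C \<in> meas_dom M" using True upto_set_downward unfolding meas_dom_def by blast
    have "phi_ext \<phi> (rearr M f t) \<le> phi_ext \<phi> (rearr M g (t / C))"
      by (intro phi_ext_mono[OF phi rearr_nonneg] rearr_le_rearr_dilate C)
    moreover have "ennreal (h t) \<le> ennreal (h (t / C))"
      using weight_antimono[OF w tC True] \<open>t / C \<le> t\<close> by (simp add: ennreal_leI)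
    ultimately show ?thesis unfolding F_def using True tC by (simp add: mult_mono)
  qed simp
  then have "OL_mod \<phi> h M f \<le> (\<integral>\<^sup>+ t. F (t / C) \<partial>lborel)"
    unfolding OL_mod_def by (rule nn_integral_mono)
  also have "(\<integral>\<^sup>+ t. F (t / C) \<partial>lborel) = ennreal C * integral\<^sup>N lborel F"
  proof -
    have "integral\<^sup>N lborel F = ennreal (1 / C) * (\<integral>\<^sup>+ t. F (t / C) \<partial>lborel)"
      using nn_integral_real_affine[OF F, of "1 / C" 0] C(1) by simp
    moreover have "ennreal C * ennreal (1 / C) = 1" using C(1) by (simp flip: ennreal_mult)
    ultimately show ?thesis by (simp add: mult.assoc[symmetric])
  qed
  finally show ?thesis unfolding F_def OL_mod_def .
qed

lemma OL_space_feasible: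
  assumes phi: "orlicz_function \<phi>" and w: "weight M h" and g: "g \<in> OL_space \<phi> h M"
  shows "\<exists>l>0. OL_mod \<phi> h M (\<lambda>x. g x / l) \<le> 1"
proof -
  obtain l0 where "0 < l0" "OL_mod \<phi> h M (\<lambda>x. l0 * g x) < \<infinity>"
    using g unfolding OL_space_def by blast
  moreover define K where "K = enn2real (OL_mod \<phi> h M (\<lambda>x. l0 * g x))"
  ultimately have l0: "0 < l0" "OL_mod \<phi> h M (\<lambda>x. l0 * g x) = ennreal K" "0 \<le> K"
    by simp_all
  define k where "k = max 1 K"
  have k: "1 \<le> k" "K \<le> k" unfolding k_def by simp_all
  have "(\<lambda>x. g x / (k / l0)) = (\<lambda>x. l0 * g x / k)" using l0(1) by auto
  then have "OL_mod \<phi> h M (\<lambda>x. g x / (k / l0)) \<le> ennreal K / ennreal k"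
    using OL_mod_divide[OF phi w k(1), of "\<lambda>x. l0 * g x"] l0(2) by simp
  also have "\<dots> \<le> 1" using k l0(3) by (simp add: divide_ennreal ennreal_le_1)
  finally show ?thesis using l0(1) k(1) by (intro exI[of _ "k / l0"]) simp
qed

lemma OL_norm_mono:
  assumes phi: "orlicz_function \<phi>" and w: "weight M h" and g: "g \<in> OL_space \<phi> h M"
    and le: "\<And>x. x \<in> space M \<Longrightarrow> \<bar>f x\<bar> \<le> \<bar>g x\<bar>"
  shows "OL_norm \<phi> h M f \<le> OL_norm \<phi> h M g"
  unfolding OL_norm_def
proof (rule cInf_superset_mono)
  show "{l. 0 < l \<and> OL_mod \<phi> h M (\<lambda>x. g x / l) \<le> 1} \<noteq> {}"
    using OL_space_feasible[OF phi w g] by auto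
  show "bdd_below {l::real. 0 < l \<and> OL_mod \<phi> h M (\<lambda>x. f x / l) \<le> 1}"
    by (rule bdd_belowI[of _ 0]) auto
  have "OL_mod \<phi> h M (\<lambda>x. f x / l) \<le> OL_mod \<phi> h M (\<lambda>x. g x / l)" if "0 < l" for l
    using g le that unfolding OL_space_def
    by (intro OL_mod_mono[OF phi] rearr_mono) (auto simp: abs_divide divide_right_mono)
  then show "{l. 0 < l \<and> OL_mod \<phi> h M (\<lambda>x. g x / l) \<le> 1} \<subseteq> {l. 0 < l \<and> OL_mod \<phi> h M (\<lambda>x. f x / l) \<le> 1}"
    by (auto intro: order_trans)
qed

lemma OL_norm_cong:
  assumes "\<And>x. x \<in> space M \<Longrightarrow> f x = g x"
  shows "OL_norm \<phi> h M f = OL_norm \<phi> h M g"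
proof -
  have "distf M (\<lambda>x. f x / l) = distf M (\<lambda>x. g x / l)" for l
    unfolding distf_def using assms by (intro ext arg_cong[where f = "emeasure M"]) auto
  then show ?thesis unfolding OL_norm_def OL_mod_def rearr_def by simp
qed

lemma OL_norm_eq_0_if_distf_eq_0:
  assumes phi: "orlicz_function \<phi>" and null: "\<And>e. 0 < e \<Longrightarrow> distf M g e = 0"
  shows "OL_norm \<phi> h M g = 0"
proof -
  have "rearr M (\<lambda>x. g x / l) t = 0" if "0 < l" for l t
    using null that by (intro rearr_eq_0) (simp add: distf_divide)
  then have "OL_mod \<phi> h M (\<lambda>x. g x / l) = 0" if "0 < l" for l
    using that orlicz_zero[OF phi] by (simp add: OL_mod_def phi_ext_def)
  then have "{l. 0 < l \<and> OL_mod \<phi> h M (\<lambda>x. g x / l) \<le> 1} = {0<..}" by auto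
  then show ?thesis unfolding OL_norm_def by simp
qed

section \<open>Integer powers of nonsingular bijections\<close>

lemma tau_pow_succ:
  assumes bij: "bij_betw \<tau> (space M) (space M)" and x: "x \<in> space M"
  shows "tau_pow M \<tau> (n + 1) x = \<tau> (tau_pow M \<tau> n x)"
proof (cases "0 \<le> n")
  case True
  then show ?thesis by (simp add: tau_pow_def nat_add_distrib)
next
  case False
  define \<iota> where "\<iota> = inv_into (space M) \<tau>"
  obtain m where m: "nat (- n) = Suc m" "nat (- (n + 1)) = m"
    using False by (intro that[of "nat (- n - 1)"]) auto
  have "(\<iota> ^^ m) x \<in> space M"
    using bij_betw_funpow[OF bij_betw_inv_into[OF bij]] x unfolding \<iota>_def bij_betw_def by blast
  then have "\<tau> (\<iota> ((\<iota> ^^ m) x)) = (\<iota> ^^ m) x"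
    unfolding \<iota>_def by (rule bij_betw_inv_into_right[OF bij])
  then show ?thesis using False m by (cases "n = -1") (simp_all add: tau_pow_def \<iota>_def)
qed

lemma tau_pow_pred:
  assumes bij: "bij_betw \<tau> (space M) (space M)" and x: "x \<in> space M"
  shows "tau_pow M \<tau> (n - 1) x = inv_into (space M) \<tau> (tau_pow M \<tau> n x)"
proof (cases "0 < n")
  case True
  obtain m where m: "nat n = Suc m" "nat (n - 1) = m"
    using True by (intro that[of "nat (n - 1)"]) auto
  have "(\<tau> ^^ m) x \<in> space M"
    using bij_betw_funpow[OF bij] x unfolding bij_betw_def by blast
  then show ?thesis using True m by (simp add: tau_pow_def bij_betw_inv_into_left[OF bij])
next
  case False
  then have "nat (- (n - 1)) = Suc (nat (- n))" by simp
  then show ?thesis using False by (simp add: tau_pow_def)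
qed

lemma tau_pow_in_space:
  assumes "bij_betw \<tau> (space M) (space M)" "x \<in> space M"
  shows "tau_pow M \<tau> n x \<in> space M"
  using bij_betwE[OF bij_betw_funpow[OF assms(1)]]
    bij_betwE[OF bij_betw_funpow[OF bij_betw_inv_into[OF assms(1)]]] assms(2)
  unfolding tau_pow_def by simp

lemma tau_pow_add:
  assumes bij: "bij_betw \<tau> (space M) (space M)" and x: "x \<in> space M"
  shows "tau_pow M \<tau> k (tau_pow M \<tau> n x) = tau_pow M \<tau> (k + n) x"
proof (induction k rule: int_induct[where k = 0])
  case base
  then show ?case by (simp add: tau_pow_def)
next
  case (step1 i)
  have "tau_pow M \<tau> (i + 1) (tau_pow M \<tau> n x) = \<tau> (tau_pow M \<tau> (i + n) x)"
    using step1 tau_pow_succ[OF bij tau_pow_in_space[OF bij x]] by simp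
  also have "\<dots> = tau_pow M \<tau> (i + n + 1) x" using tau_pow_succ[OF bij x] by simp
  finally show ?case by (simp add: ac_simps)
next
  case (step2 i)
  have "tau_pow M \<tau> (i - 1) (tau_pow M \<tau> n x) = inv_into (space M) \<tau> (tau_pow M \<tau> (i + n) x)"
    using step2 tau_pow_pred[OF bij tau_pow_in_space[OF bij x]] by simp
  also have "\<dots> = tau_pow M \<tau> (i + n - 1) x" using tau_pow_pred[OF bij x] by simp
  finally show ?case by (simp add: algebra_simps)
qed

definition nonsingular_bij :: "'a measure \<Rightarrow> ('a \<Rightarrow> 'a) \<Rightarrow> bool" where
  "nonsingular_bij M \<sigma> \<longleftrightarrow> \<sigma> \<in> M \<rightarrow>\<^sub>M M \<and> bij_betw \<sigma> (space M) (space M)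
     \<and> (\<forall>A\<in>sets M. \<sigma> ` A \<in> sets M)
     \<and> (\<exists>C<\<infinity>. \<forall>A\<in>sets M. emeasure M (\<sigma> -` A \<inter> space M) \<le> C * emeasure M A)
     \<and> (\<exists>C<\<infinity>. \<forall>A\<in>sets M. emeasure M (\<sigma> ` A) \<le> C * emeasure M A)"

lemma nonsingular_bij_id: "nonsingular_bij M id"
  unfolding nonsingular_bij_def
proof (intro conjI)
  show "\<exists>C<\<infinity>. \<forall>A\<in>sets M. emeasure M (id -` A \<inter> space M) \<le> C * emeasure M A"
    by (intro exI[of _ 1]) (auto simp: Int_absorb2 sets.sets_into_space)
qed (auto intro: exI[of _ 1] simp: bij_betw_def)

lemma nonsingular_bij_comp:
  assumes "nonsingular_bij M \<sigma>" "nonsingular_bij M \<rho>"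
  shows "nonsingular_bij M (\<sigma> \<circ> \<rho>)"
proof -
  have m: "\<sigma> \<in> M \<rightarrow>\<^sub>M M" "\<rho> \<in> M \<rightarrow>\<^sub>M M"
    and b: "bij_betw \<sigma> (space M) (space M)" "bij_betw \<rho> (space M) (space M)"
    and i: "\<forall>A\<in>sets M. \<sigma> ` A \<in> sets M" "\<forall>A\<in>sets M. \<rho> ` A \<in> sets M"
    using assms unfolding nonsingular_bij_def by blast+
  obtain C1 C2 D1 D2 where C: "C1 < \<infinity>" "C2 < \<infinity>" "D1 < \<infinity>" "D2 < \<infinity>"
    and pre1: "\<forall>A\<in>sets M. emeasure M (\<sigma> -` A \<inter> space M) \<le> C1 * emeasure M A"
    and pre2: "\<forall>A\<in>sets M. emeasure M (\<rho> -` A \<inter> space M) \<le> C2 * emeasure M A"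
    and img1: "\<forall>A\<in>sets M. emeasure M (\<sigma> ` A) \<le> D1 * emeasure M A"
    and img2: "\<forall>A\<in>sets M. emeasure M (\<rho> ` A) \<le> D2 * emeasure M A"
    using assms unfolding nonsingular_bij_def by metis
  have "emeasure M ((\<sigma> \<circ> \<rho>) -` A \<inter> space M) \<le> (C2 * C1) * emeasure M A" if A: "A \<in> sets M" for A
  proof -
    have eq: "(\<sigma> \<circ> \<rho>) -` A \<inter> space M = \<rho> -` (\<sigma> -` A \<inter> space M) \<inter> space M"
      using measurable_space[OF m(2)] by auto
    have "emeasure M ((\<sigma> \<circ> \<rho>) -` A \<inter> space M) \<le> C2 * emeasure M (\<sigma> -` A \<inter> space M)"
      unfolding eq using pre2 measurable_sets[OF m(1) A] by blast
    also have "\<dots> \<le> C2 * (C1 * emeasure M A)" using pre1 A by (intro mult_left_mono) auto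
    finally show ?thesis by (simp add: mult.assoc)
  qed
  moreover have "emeasure M ((\<sigma> \<circ> \<rho>) ` A) \<le> (D1 * D2) * emeasure M A" if A: "A \<in> sets M" for A
  proof -
    have "emeasure M ((\<sigma> \<circ> \<rho>) ` A) \<le> D1 * emeasure M (\<rho> ` A)"
      using img1 i(2) A by (metis image_comp)
    also have "\<dots> \<le> D1 * (D2 * emeasure M A)" using img2 A by (intro mult_left_mono) auto
    finally show ?thesis by (simp add: mult.assoc)
  qed
  moreover have "(\<sigma> \<circ> \<rho>) ` A \<in> sets M" if "A \<in> sets M" for A
    using i that by (metis image_comp)
  moreover have "C2 * C1 < \<infinity>" "D1 * D2 < \<infinity>" using C by (simp_all add: ennreal_mult_less_top)
  ultimately show ?thesis
    using measurable_comp[OF m(2,1)] bij_betw_trans[OF b(2,1)]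
    unfolding nonsingular_bij_def by blast
qed

lemma nonsingular_bij_funpow: "nonsingular_bij M \<sigma> \<Longrightarrow> nonsingular_bij M (\<sigma> ^^ n)"
  by (induction n) (simp_all add: nonsingular_bij_id nonsingular_bij_comp)

text \<open>For a bijection of the space, preimages under the inverse are images and vice versa, so the
  two measure bounds in the definition trade places.\<close>
lemma nonsingular_bij_inv_into:
  assumes "nonsingular_bij M \<sigma>"
  shows "nonsingular_bij M (inv_into (space M) \<sigma>)"
proof -
  define \<iota> where "\<iota> = inv_into (space M) \<sigma>"
  have m: "\<sigma> \<in> M \<rightarrow>\<^sub>M M" and b: "bij_betw \<sigma> (space M) (space M)" and i: "\<forall>A\<in>sets M. \<sigma> ` A \<in> sets M"
    using assms unfolding nonsingular_bij_def by blast+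
  have vimage_inv: "\<iota> -` A \<inter> space M = \<sigma> ` A" and image_inv: "\<iota> ` A = \<sigma> -` A \<inter> space M"
    if "A \<in> sets M" for A
    using sets.sets_into_space[OF that] b bij_betw_inv_into_left[OF b] bij_betw_inv_into_right[OF b]
      bij_betwE[OF b] bij_betwE[OF bij_betw_inv_into[OF b]]
    unfolding \<iota>_def by (auto, (metis image_eqI)+)
  have "\<iota> \<in> M \<rightarrow>\<^sub>M M"
    using bij_betwE[OF bij_betw_inv_into[OF b]] i vimage_inv unfolding \<iota>_def by (intro measurableI) auto
  then show ?thesis
    using assms bij_betw_inv_into[OF b] measurable_sets[OF m] vimage_inv image_inv
    unfolding nonsingular_bij_def \<iota>_def[symmetric] by simp
qed

lemma nonsingular_bij_tau_pow: "nonsingular_bij M \<tau> \<Longrightarrow> nonsingular_bij M (tau_pow M \<tau> n)"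
  unfolding tau_pow_def by (simp add: nonsingular_bij_funpow nonsingular_bij_inv_into)

lemma nonsingular_bij_if_comp_dyn_sys:
  assumes "comp_dyn_sys \<phi> h M \<tau>" "bij_betw \<tau> (space M) (space M)"
    and "\<exists>c>0. \<forall>A\<in>sets M. emeasure M (\<tau> ` A) \<le> ennreal c * emeasure M A"
  shows "nonsingular_bij M \<tau>"
proof -
  obtain c d where "\<forall>A\<in>sets M. emeasure M (\<tau> -` A \<inter> space M) \<le> ennreal c * emeasure M A"
    and "\<forall>A\<in>sets M. emeasure M (\<tau> ` A) \<le> ennreal d * emeasure M A"
    using assms(1,3) unfolding comp_dyn_sys_def by blast
  moreover have "ennreal c < \<infinity>" "ennreal d < \<infinity>" by simp_all
  ultimately show ?thesis using assms(1,2) unfolding comp_dyn_sys_def nonsingular_bij_def by blast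
qed

lemma vimage_nonsingular_bij:
  assumes \<sigma>: "nonsingular_bij M \<sigma>" and A: "A \<in> sets M" "0 < emeasure M A" "emeasure M A < \<infinity>"
  shows "\<sigma> -` A \<inter> space M \<in> sets M" "0 < emeasure M (\<sigma> -` A \<inter> space M)"
    "emeasure M (\<sigma> -` A \<inter> space M) < \<infinity>"
proof -
  have m: "\<sigma> \<in> M \<rightarrow>\<^sub>M M" and b: "\<sigma> ` space M = space M"
    using \<sigma> unfolding nonsingular_bij_def bij_betw_def by blast+
  obtain C where C: "C < \<infinity>" "\<forall>A\<in>sets M. emeasure M (\<sigma> -` A \<inter> space M) \<le> C * emeasure M A"
    using \<sigma> unfolding nonsingular_bij_def by blast
  obtain D where D: "\<forall>A\<in>sets M. emeasure M (\<sigma> ` A) \<le> D * emeasure M A"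
    using \<sigma> unfolding nonsingular_bij_def by blast
  show s: "\<sigma> -` A \<inter> space M \<in> sets M" using measurable_sets[OF m A(1)] .
  have "emeasure M (\<sigma> -` A \<inter> space M) \<le> C * emeasure M A" using C(2) A(1) by blast
  also have "\<dots> < \<infinity>" using C(1) A(3) by (simp add: ennreal_mult_less_top)
  finally show "emeasure M (\<sigma> -` A \<inter> space M) < \<infinity>" .
  have "\<sigma> ` (\<sigma> -` A \<inter> space M) = A"
  proof
    show "A \<subseteq> \<sigma> ` (\<sigma> -` A \<inter> space M)"
    proof
      fix x assume x: "x \<in> A"
      then obtain y where "y \<in> space M" "x = \<sigma> y" using sets.sets_into_space[OF A(1)] b by blast
      then show "x \<in> \<sigma> ` (\<sigma> -` A \<inter> space M)" using x by blast
    qed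
  qed auto
  then have "emeasure M A \<le> D * emeasure M (\<sigma> -` A \<inter> space M)" using D s by metis
  then show "0 < emeasure M (\<sigma> -` A \<inter> space M)" using A(2) by (auto simp: zero_less_iff_neq_zero)
qed

lemma vimage_tau_pow_vimage_tau_pow:
  assumes "bij_betw \<tau> (space M) (space M)"
  shows "tau_pow M \<tau> n -` (tau_pow M \<tau> k -` A \<inter> space M) \<inter> space M = tau_pow M \<tau> (k + n) -` A \<inter> space M"
  using tau_pow_add[OF assms] tau_pow_in_space[OF assms] by auto

lemma distf_comp_le:
  assumes "\<sigma> \<in> M \<rightarrow>\<^sub>M M" "f \<in> borel_measurable M"
    and "\<forall>A\<in>sets M. emeasure M (\<sigma> -` A \<inter> space M) \<le> C * emeasure M A"
  shows "distf M (f \<circ> \<sigma>) l \<le> C * distf M f l"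
proof -
  have eq: "{x \<in> space M. l < \<bar>(f \<circ> \<sigma>) x\<bar>} = \<sigma> -` {x \<in> space M. l < \<bar>f x\<bar>} \<inter> space M"
    using measurable_space[OF assms(1)] by auto
  have "{x \<in> space M. l < \<bar>f x\<bar>} \<in> sets M" using assms(2) by measurable
  then show ?thesis unfolding distf_def eq using assms(3) by blast
qed

lemma OL_space_comp:
  assumes phi: "orlicz_function \<phi>" and w: "weight M h" and \<sigma>: "nonsingular_bij M \<sigma>"
    and g: "g \<in> OL_space \<phi> h M"
  shows "g \<circ> \<sigma> \<in> OL_space \<phi> h M"
proof -
  obtain C where C: "C < \<infinity>" "\<forall>A\<in>sets M. emeasure M (\<sigma> -` A \<inter> space M) \<le> C * emeasure M A"
    and m: "\<sigma> \<in> M \<rightarrow>\<^sub>M M"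
    using \<sigma> unfolding nonsingular_bij_def by blast
  obtain l0 where l0: "0 < l0" "OL_mod \<phi> h M (\<lambda>x. l0 * g x) < \<infinity>" and gm: "g \<in> borel_measurable M"
    using g unfolding OL_space_def by blast
  define C' where "C' = max 1 (enn2real C)"
  have C': "1 \<le> C'" "C \<le> ennreal C'"
  proof -
    show "1 \<le> C'" unfolding C'_def by simp
    have "C = ennreal (enn2real C)" using C(1) by simp
    also have "\<dots> \<le> ennreal C'" unfolding C'_def by (intro ennreal_leI) simp
    finally show "C \<le> ennreal C'" .
  qed
  have "distf M (\<lambda>x. l0 * (g \<circ> \<sigma>) x) l \<le> ennreal C' * distf M (\<lambda>x. l0 * g x) l" for l
    using distf_comp_le[OF m _ C(2), of "\<lambda>x. l0 * g x" l] gm C'(2)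
    by (auto simp: comp_def intro: order_trans[OF _ mult_right_mono])
  then have "OL_mod \<phi> h M (\<lambda>x. l0 * (g \<circ> \<sigma>) x) \<le> ennreal C' * OL_mod \<phi> h M (\<lambda>x. l0 * g x)"
    by (rule OL_mod_dilate[OF phi w C'(1)])
  also have "\<dots> < \<infinity>" using l0(2) by (simp add: ennreal_mult_less_top)
  finally show ?thesis
    using l0(1) measurable_comp[OF m gm] unfolding OL_space_def by auto
qed

lemma (in sigma_finite_measure) obtain_positive_finite_subset:
  assumes "A \<in> sets M" "emeasure M A \<noteq> 0"
  obtains B where "B \<in> sets M" "B \<subseteq> A" "0 < emeasure M B" "emeasure M B < \<infinity>"
proof (cases "emeasure M A = \<infinity>")
  case True
  then show ?thesis using approx_PInf_emeasure_with_finite[OF assms(1) True, of 0] that by auto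
next
  case False
  then show ?thesis using that[of A] assms by (simp add: zero_less_iff_neq_zero less_top)
qed

section \<open>Expansivity\<close>

lemma inf_recip_indicator_norm_eq_0_if_expansive:
  assumes phi: "orlicz_function \<phi>" and w: "weight M h" and \<tau>: "nonsingular_bij M \<tau>"
    and exp: "expansive_comp \<phi> h M \<tau>"
    and A: "A \<in> sets M" "0 < emeasure M A" "emeasure M A < \<infinity>"
  shows "(INF n. recip_indicator_norm \<phi> h M (tau_pow M \<tau> n -` A \<inter> space M)) = 0"
proof -
  define B where "B n = tau_pow M \<tau> n -` A \<inter> space M" for n
  define v where "v n = recip_indicator_norm \<phi> h M (B n)" for n
  have B: "B n \<in> sets M" "0 < emeasure M (B n)" "emeasure M (B n) < \<infinity>" for n
    unfolding B_def using vimage_nonsingular_bij[OF nonsingular_bij_tau_pow[OF \<tau>] A] by auto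
  have v: "0 < v n" for n unfolding v_def by (rule recip_indicator_norm_pos[OF phi w B])
  have bij: "bij_betw \<tau> (space M) (space M)" using \<tau> unfolding nonsingular_bij_def by blast
  have bdd: "bdd_below (range v)" using v by (intro bdd_belowI2[of _ 0]) (simp add: less_imp_le)
  have "\<not> 0 < (INF n. v n)"
  proof
    assume pos: "0 < (INF n. v n)"
    then have "(INF n. v n) < 2 * (INF n. v n)" by simp
    then obtain k where k: "v k < 2 * (INF n. v n)"
      using cINF_less_iff[OF UNIV_not_empty bdd] by blast
    define g where "g x = v k * indicator (B k) x" for x
    have "g \<in> OL_space \<phi> h M" "OL_norm \<phi> h M g = 1"
      unfolding g_def
      using scaled_indicator_in_OL_space[OF phi w B v] OL_norm_scaled_indicator[OF phi w B v]
        v[of k, unfolded v_def]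
      by (simp_all add: v_def)
    then obtain n where n: "2 \<le> OL_norm \<phi> h M (g \<circ> tau_pow M \<tau> n)"
      using exp unfolding expansive_comp_def by blast
    have "B k \<subseteq> space M" "tau_pow M \<tau> n -` B k \<inter> space M = B (k + n)"
      unfolding B_def using vimage_tau_pow_vimage_tau_pow[OF bij] by auto
    then have "OL_norm \<phi> h M (g \<circ> tau_pow M \<tau> n)
        = OL_norm \<phi> h M (\<lambda>x. v k * indicator (B (k + n)) x)"
      unfolding g_def by (intro OL_norm_cong) (auto simp: indicator_def)
    also have "\<dots> = v k / v (k + n)"
      using OL_norm_scaled_indicator[OF phi w B v] by (simp add: v_def[symmetric])
    also have "\<dots> < 2"
      using k cINF_lower[OF bdd, of "k + n"] v[of "k + n"] by (simp add: divide_less_eq)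
    finally show False using n by simp
  qed
  moreover have "0 \<le> (INF n. v n)" using v by (intro cINF_greatest) (auto intro: less_imp_le)
  ultimately show ?thesis unfolding v_def B_def by simp
qed

lemma expansive_if_inf_recip_indicator_norm_eq_0:
  assumes phi: "orlicz_function \<phi>" and w: "weight M h" and sf: "sigma_finite_measure M"
    and \<tau>: "nonsingular_bij M \<tau>"
    and inf: "\<And>A. A \<in> sets M \<Longrightarrow> 0 < emeasure M A \<Longrightarrow> emeasure M A < \<infinity> \<Longrightarrow>
      (INF n. recip_indicator_norm \<phi> h M (tau_pow M \<tau> n -` A \<inter> space M)) = 0"
  shows "expansive_comp \<phi> h M \<tau>"
  unfolding expansive_comp_def
proof (intro ballI impI)
  fix g assume g: "g \<in> OL_space \<phi> h M" and g1: "OL_norm \<phi> h M g = 1"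
  have "\<not> (\<forall>e>0. distf M g e = 0)" using OL_norm_eq_0_if_distf_eq_0[OF phi, of M g h] g1 by auto
  then obtain e where e: "0 < e" "emeasure M {x \<in> space M. e < \<bar>g x\<bar>} \<noteq> 0"
    unfolding distf_def by blast
  have "g \<in> borel_measurable M" using g unfolding OL_space_def by blast
  then have "{x \<in> space M. e < \<bar>g x\<bar>} \<in> sets M" by measurable
  then obtain A where A: "A \<in> sets M" "A \<subseteq> {x \<in> space M. e < \<bar>g x\<bar>}"
    "0 < emeasure M A" "emeasure M A < \<infinity>"
    using e(2) by (rule sigma_finite_measure.obtain_positive_finite_subset[OF sf])
  have B: "tau_pow M \<tau> n -` A \<inter> space M \<in> sets M" "0 < emeasure M (tau_pow M \<tau> n -` A \<inter> space M)"
    "emeasure M (tau_pow M \<tau> n -` A \<inter> space M) < \<infinity>" for n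
    using vimage_nonsingular_bij[OF nonsingular_bij_tau_pow[OF \<tau>] A(1,3,4)] by blast+
  define v where "v n = recip_indicator_norm \<phi> h M (tau_pow M \<tau> n -` A \<inter> space M)" for n
  have v: "0 < v n" for n unfolding v_def by (rule recip_indicator_norm_pos[OF phi w B])
  have bdd: "bdd_below (range v)" using v by (intro bdd_belowI2[of _ 0]) (simp add: less_imp_le)
  have "(INF n. v n) < e / 2" using inf[OF A(1,3,4)] e(1) unfolding v_def by simp
  then obtain n where n: "v n < e / 2" using cINF_less_iff[OF UNIV_not_empty bdd] by blast
  have "2 < e / v n" using n v[of n] by (simp add: less_divide_eq)
  also have "e / v n = OL_norm \<phi> h M (\<lambda>x. e * indicator (tau_pow M \<tau> n -` A \<inter> space M) x)"
    unfolding v_def using OL_norm_scaled_indicator[OF phi w B e(1)] by simp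
  also have "\<dots> \<le> OL_norm \<phi> h M (g \<circ> tau_pow M \<tau> n)"
    using A(2) e(1) OL_space_comp[OF phi w nonsingular_bij_tau_pow[OF \<tau>] g]
    by (intro OL_norm_mono[OF phi w]) (auto simp: indicator_def)
  finally show "\<exists>n. 2 \<le> OL_norm \<phi> h M (g \<circ> tau_pow M \<tau> n)" by (auto intro: less_imp_le)
qed

theorem mainTheorem1:
  fixes \<phi> h :: "real \<Rightarrow> real" and M :: "'a measure" and \<tau> :: "'a \<Rightarrow> 'a"
  assumes "orlicz_function \<phi>"
    and "weight M h"
    and "comp_dyn_sys \<phi> h M \<tau>"
    and "bij_betw \<tau> (space M) (space M)"
    and "\<exists>c>0. \<forall>A\<in>sets M. emeasure M (\<tau> ` A) \<le> ennreal c * emeasure M A"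
  shows "expansive_comp \<phi> h M \<tau> \<longleftrightarrow>
    (\<forall>A\<in>sets M. 0 < emeasure M A \<and> emeasure M A < \<infinity> \<longrightarrow>
       (INF n::int. phi_inv \<phi> (enn2real (1 / hint_upto h (emeasure M (tau_pow M \<tau> n -` A \<inter> space M))))) = 0)"
proof -
  have \<tau>: "nonsingular_bij M \<tau>" using nonsingular_bij_if_comp_dyn_sys[OF assms(3-5)] .
  have sf: "sigma_finite_measure M" using assms(3) unfolding comp_dyn_sys_def by blast
  show ?thesis
    unfolding recip_indicator_norm_def[symmetric]
    using inf_recip_indicator_norm_eq_0_if_expansive[OF assms(1,2) \<tau>]
      expansive_if_inf_recip_indicator_norm_eq_0[OF assms(1,2) sf \<tau>]
    by blast
qed

end
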